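(* Let $\mathcal{A}_n$ denote either $\mathcal{C}_{n,A}$ for all $n$, or $\mathcal{C}^*_{n,A}$ for all $n$. For all integers $\ell_1,\ell_2\ge0$ and $n\ge0$, \[r_{\ell_1+\ell_2}(\mathcal{A}_n)=\sum_{i=0}^n\binom{n}{i}\, r_{\ell_1}(\mathcal{A}_i)\, r_{\ell_2}(\mathcal{A}_{n-i}).\]
   Context: Let $A=\{a_1,\dots,a_m\}$ with $a_1>\dots>a_m>0$. For $n\ge1$, $\mathcal{C}_{n,A}$ is the arrangement in $\mathbb{R}^n$ of hyperplanes $x_i-x_j=0$ ($i<j$) and $x_i-x_j=a_k$ ($i\ne j$, $1\le k\le m$); $\mathcal{C}^*_{n,A}$ is the arrangement of hyperplanes $x_i-x_j=a_k$ ($i\ne j$, $1\le k\le m$). Regions are connected components of the complement of the union of the hyperplanes. The level of $X\subseteq\mathbb{R}^n$ is the smallest integer $\ell\ge0$ such that there are a linear subspace $W$ of dimension $\ell$ and $r>0$ with $X\subseteq\{\bm x:\min_{\bm y\in W}\|\bm x-\bm y\|\le r\}$. $r_\ell(\mathcal{A})$ is the number of regions of $\mathcal{A}$ of level $\ell$. Convention: for $n=0$ there is exactly one region, of level $0$. *)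

theory Defs
  imports "HOL-Analysis.Analysis"
begin

text \<open>Points of R^n are encoded as functions nat => real vanishing outside {0..<n}
 (coordinates x_1..x_n of the paper are x 0 .. x (n-1)). The topology is the
 product topology on nat => real, which restricted to Rn n is the Euclidean one.\<close>

definition Rn :: "nat \<Rightarrow> (nat \<Rightarrow> real) set" where
  "Rn n = {x. \<forall>i\<ge>n. x i = 0}"

definition enorm :: "nat \<Rightarrow> (nat \<Rightarrow> real) \<Rightarrow> real" where
  "enorm n x = sqrt (\<Sum>i<n. (x i)^2)"

definition lin_subspace_dim :: "nat \<Rightarrow> nat \<Rightarrow> (nat \<Rightarrow> real) set \<Rightarrow> bool" where
  "lin_subspace_dim n l W \<longleftrightarrow>
     (\<exists>v :: nat \<Rightarrow> nat \<Rightarrow> real.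
        (\<forall>j<l. v j \<in> Rn n) \<and>
        (\<forall>c. (\<lambda>i. \<Sum>j<l. c j * v j i) = (\<lambda>_. 0) \<longrightarrow> (\<forall>j<l. c j = 0)) \<and>
        W = {(\<lambda>i. \<Sum>j<l. c j * v j i) | c. True})"

definition level :: "nat \<Rightarrow> (nat \<Rightarrow> real) set \<Rightarrow> nat" where
  "level n X = (LEAST l. \<exists>W r. lin_subspace_dim n l W \<and> r > 0 \<and>
      X \<subseteq> {x. (INF y\<in>W. enorm n (\<lambda>i. x i - y i)) \<le> r})"

definition hyp :: "nat \<Rightarrow> nat \<Rightarrow> nat \<Rightarrow> real \<Rightarrow> (nat \<Rightarrow> real) set" where
  "hyp n i j a = {x \<in> Rn n. x i - x j = a}"

definition C_arr :: "real set \<Rightarrow> nat \<Rightarrow> (nat \<Rightarrow> real) set" where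
  "C_arr A n = \<Union>{hyp n i j 0 | i j. i < j \<and> j < n}
             \<union> \<Union>{hyp n i j a | i j a. i < n \<and> j < n \<and> i \<noteq> j \<and> a \<in> A}"

definition Cstar_arr :: "real set \<Rightarrow> nat \<Rightarrow> (nat \<Rightarrow> real) set" where
  "Cstar_arr A n = \<Union>{hyp n i j a | i j a. i < n \<and> j < n \<and> i \<noteq> j \<and> a \<in> A}"

definition regions :: "(nat \<Rightarrow> (nat \<Rightarrow> real) set) \<Rightarrow> nat \<Rightarrow> (nat \<Rightarrow> real) set set" where
  "regions H n = {connected_component_set (Rn n - H n) x | x. x \<in> Rn n - H n}"

definition r_level :: "nat \<Rightarrow> (nat \<Rightarrow> (nat \<Rightarrow> real) set) \<Rightarrow> nat \<Rightarrow> nat" where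
  "r_level l H n = card {R \<in> regions H n. level n R = l}"

end

theory Submission
  imports Defs
begin

text \<open>Both arrangements consist of the hyperplanes \<open>x\<^sub>i - x\<^sub>j = a\<close> (\<open>i \<noteq> j\<close>) for \<open>a\<close> in a finite set
  \<open>B\<close> of nonnegative reals with positive maximum \<open>c\<close> (\<open>B = A \<union> {0}\<close>, resp. \<open>B = A\<close>). A region is the
  convex set of points lying on the same side of every hyperplane as a given point.

  Call \<open>T\<close> a gap cut of \<open>x\<close> if every coordinate outside \<open>T\<close> exceeds every coordinate in \<open>T\<close>
  by more than \<open>c\<close>. The gap cuts form a chain \<open>{} = U\<^sub>0 \<subset> \<dots> \<subset> U\<^sub>k = {..<n}\<close> that is the same for all
  points of a region, and the level of the region is \<open>k\<close>: coordinates within one block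
  \<open>U\<^bsub>m+1\<^esub> - U\<^sub>m\<close> differ by at most \<open>c n\<close>, so the region stays near the span of the block
  indicators; conversely, lifting all coordinates above a cut stays in the region, which
  defeats every subspace of smaller dimension.

  A region of level \<open>l\<^sub>1 + l\<^sub>2\<close> is therefore determined by its cut \<open>T = U\<^bsub>l\<^sub>1\<^esub>\<close> together with the
  regions of the restrictions to \<open>T\<close> and to its complement, which have levels \<open>l\<^sub>1\<close> and \<open>l\<^sub>2\<close>;
  conversely any such triple arises by placing a point of the second region far above a point of
  the first. Summing over \<open>T\<close> gives the binomial convolution.\<close>

lemma homogeneous_system_nontrivial_solution:
  fixes g :: "'a \<Rightarrow> nat \<Rightarrow> real"
  assumes "finite K" "l < card K"
  shows "\<exists>x. (\<exists>m\<in>K. x m \<noteq> 0) \<and> (\<forall>j<l. (\<Sum>m\<in>K. x m * g m j) = 0)"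
  using assms
proof (induction l arbitrary: K g)
  case 0
  then have "K \<noteq> {}" by auto
  then show ?case by (intro exI[of _ "\<lambda>_. 1"]) auto
next
  case (Suc l)
  show ?case
  proof (cases "\<forall>m\<in>K. g m l = 0")
    case True
    obtain x where "\<exists>m\<in>K. x m \<noteq> 0" "\<forall>j<l. (\<Sum>m\<in>K. x m * g m j) = 0"
      using Suc.IH[of K g] Suc.prems by auto
    moreover have "(\<Sum>m\<in>K. x m * g m l) = 0" using True by simp
    ultimately show ?thesis by (metis less_Suc_eq)
  next
    case False
    then obtain m0 where m0: "m0 \<in> K" "g m0 l \<noteq> 0" by blast
    define K' where "K' = K - {m0}"
    \<comment> \<open>Eliminate the unknown \<open>m0\<close> with equation \<open>l\<close>.\<close>
    define g' where "g' m j = g m j - (g m l / g m0 l) * g m0 j" for m j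
    have "finite K'" "l < card K'" using Suc.prems m0 unfolding K'_def by auto
    then obtain x' where x': "\<exists>m\<in>K'. x' m \<noteq> 0" "\<forall>j<l. (\<Sum>m\<in>K'. x' m * g' m j) = 0"
      using Suc.IH[of K' g'] by blast
    define x where "x m = (if m = m0 then - (\<Sum>m\<in>K'. x' m * g m l) / g m0 l else x' m)" for m
    have split: "(\<Sum>m\<in>K. x m * g m j) = x m0 * g m0 j + (\<Sum>m\<in>K'. x' m * g m j)" for j
      unfolding K'_def using Suc.prems(1) m0(1) by (simp add: sum.remove x_def)
    have "(\<Sum>m\<in>K. x m * g m j) = 0" if "j < Suc l" for j
    proof (cases "j = l")
      case True then show ?thesis using split[of l] m0(2) by (simp add: x_def)
    next
      case False
      then have "(\<Sum>m\<in>K'. x' m * g m j) = (g m0 j / g m0 l) * (\<Sum>m\<in>K'. x' m * g m l)"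
        using x'(2) that unfolding g'_def
        by (simp add: algebra_simps sum_subtractf sum_distrib_left)
      then show ?thesis using split[of j] by (simp add: x_def)
    qed
    moreover have "\<exists>m\<in>K. x m \<noteq> 0" using x'(1) unfolding x_def K'_def by auto
    ultimately show ?thesis by blast
  qed
qed

lemma enorm_nonneg: "0 \<le> enorm n d"
  unfolding enorm_def by (simp add: sum_nonneg)

lemma abs_le_enorm:
  assumes "i < n" shows "\<bar>d i\<bar> \<le> enorm n d"
proof -
  have "(d i)\<^sup>2 \<le> (\<Sum>j<n. (d j)\<^sup>2)" using assms by (intro member_le_sum) auto
  then show ?thesis unfolding enorm_def by (metis real_sqrt_abs real_sqrt_le_mono)
qed

lemma abs_sum_mult_le_enorm: "\<bar>\<Sum>i<n. w i * d i\<bar> \<le> (\<Sum>i<n. \<bar>w i\<bar>) * enorm n d"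
proof -
  have "\<bar>\<Sum>i<n. w i * d i\<bar> \<le> (\<Sum>i<n. \<bar>w i\<bar> * enorm n d)"
    by (rule order.trans[OF sum_abs sum_mono]) (auto simp: abs_mult intro: mult_left_mono abs_le_enorm)
  then show ?thesis by (simp add: sum_distrib_right)
qed

lemma enorm_le:
  assumes "0 \<le> K" "\<And>i. i < n \<Longrightarrow> \<bar>d i\<bar> \<le> K"
  shows "enorm n d \<le> K * sqrt n"
proof -
  have "(\<Sum>i<n. (d i)\<^sup>2) \<le> (\<Sum>i<n. K\<^sup>2)"
    by (intro sum_mono) (metis abs_ge_zero assms(2) lessThan_iff power2_abs power_mono)
  then have "enorm n d \<le> sqrt (n * K\<^sup>2)" unfolding enorm_def by (intro real_sqrt_le_mono) simp
  also have "\<dots> = K * sqrt n" using assms(1) by (simp add: real_sqrt_mult)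
  finally show ?thesis .
qed

lemma abs_functional_le_near_kernel:
  assumes "W \<noteq> {}" "\<forall>v\<in>W. (\<Sum>i<n. w i * v i) = 0"
    and "(INF v\<in>W. enorm n (\<lambda>i. y i - v i)) \<le> r"
  shows "\<bar>\<Sum>i<n. w i * y i\<bar> \<le> (\<Sum>i<n. \<bar>w i\<bar>) * (r + 1)"
proof -
  have "bdd_below ((\<lambda>v. enorm n (\<lambda>i. y i - v i)) ` W)"
    by (rule bdd_belowI[of _ 0]) (auto simp: enorm_nonneg)
  moreover have "(INF v\<in>W. enorm n (\<lambda>i. y i - v i)) < r + 1" using assms(3) by linarith
  ultimately obtain v where v: "v \<in> W" "enorm n (\<lambda>i. y i - v i) < r + 1"
    using cINF_less_iff[OF assms(1)] by blast
  have "(\<Sum>i<n. w i * y i) = (\<Sum>i<n. w i * (y i - v i))"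
    using assms(2) v(1) by (simp add: algebra_simps sum_subtractf)
  also have "\<bar>\<dots>\<bar> \<le> (\<Sum>i<n. \<bar>w i\<bar>) * enorm n (\<lambda>i. y i - v i)"
    by (rule abs_sum_mult_le_enorm)
  also have "\<dots> \<le> (\<Sum>i<n. \<bar>w i\<bar>) * (r + 1)"
    using v(2) by (intro mult_left_mono) (auto intro: sum_nonneg)
  finally show ?thesis .
qed

lemma card_image_eq_if_same_kernel:
  assumes "\<And>x y. x \<in> X \<Longrightarrow> y \<in> X \<Longrightarrow> f x = f y \<longleftrightarrow> g x = g y"
  shows "card (f ` X) = card (g ` X)"
proof -
  define h where "h u = g (SOME x. x \<in> X \<and> f x = u)" for u
  have hf: "h (f x) = g x" if "x \<in> X" for x
  proof -
    have "\<exists>x'. x' \<in> X \<and> f x' = f x" using that by blast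
    then have "(SOME x'. x' \<in> X \<and> f x' = f x) \<in> X \<and> f (SOME x'. x' \<in> X \<and> f x' = f x) = f x"
      by (rule someI_ex)
    then show ?thesis unfolding h_def using assms that by blast
  qed
  have "inj_on h (f ` X)" by (rule inj_onI) (auto simp: hf assms)
  moreover have "h ` f ` X = g ` X" using hf by (auto simp: image_image)
  ultimately show ?thesis by (metis card_image)
qed

lemma sum_Pow_card:
  fixes f :: "nat \<Rightarrow> 'a::comm_semiring_1"
  shows "(\<Sum>T\<in>Pow {..<n}. f (card T)) = (\<Sum>i\<le>n. of_nat (n choose i) * f i)"
proof -
  have "(\<Sum>T\<in>Pow {..<n}. f (card T)) = (\<Sum>i\<le>n. \<Sum>T\<in>{T \<in> Pow {..<n}. card T = i}. f (card T))"
    by (rule sum.group[symmetric]) (auto intro: card_mono[of "{..<n}", simplified])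
  also have "\<dots> = (\<Sum>i\<le>n. of_nat (card {T \<in> Pow {..<n}. card T = i}) * f i)"
    by (intro sum.cong refl) simp
  also have "\<dots> = (\<Sum>i\<le>n. of_nat (n choose i) * f i)"
    using n_subsets[of "{..<n}"] by simp
  finally show ?thesis .
qed

section \<open>Regions of difference arrangements\<close>

definition diff_arrangement :: "real set \<Rightarrow> nat \<Rightarrow> (nat \<Rightarrow> real) set" where
  "diff_arrangement B n = {x \<in> Rn n. \<exists>i<n. \<exists>j<n. i \<noteq> j \<and> x i - x j \<in> B}"

lemma C_arr_eq_diff_arrangement: "C_arr A = diff_arrangement (insert 0 A)"
proof (intro ext set_eqI iffI)
  fix n x assume "x \<in> diff_arrangement (insert 0 A) n"
  then obtain i j where ij: "x \<in> Rn n" "i < n" "j < n" "i \<noteq> j" "x i - x j \<in> insert 0 A"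
    unfolding diff_arrangement_def by blast
  show "x \<in> C_arr A n"
  proof (cases "x i - x j \<in> A")
    case True
    then show ?thesis using ij unfolding C_arr_def hyp_def by blast
  next
    case False
    then have "x \<in> hyp n (min i j) (max i j) 0" using ij by (auto simp: hyp_def min_def max_def)
    moreover have "min i j < max i j" "max i j < n" using ij by auto
    ultimately show ?thesis unfolding C_arr_def by blast
  qed
next
  fix n x assume "x \<in> C_arr A n"
  then show "x \<in> diff_arrangement (insert 0 A) n"
    unfolding C_arr_def diff_arrangement_def hyp_def by (auto dest: less_trans)
qed

lemma Cstar_arr_eq_diff_arrangement: "Cstar_arr A = diff_arrangement A"
  by (intro ext) (auto simp: Cstar_arr_def diff_arrangement_def hyp_def)


definition diff_complement :: "real set \<Rightarrow> nat \<Rightarrow> (nat \<Rightarrow> real) set" where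
  "diff_complement B n = Rn n - diff_arrangement B n"

definition same_side :: "real set \<Rightarrow> nat \<Rightarrow> (nat \<Rightarrow> real) \<Rightarrow> (nat \<Rightarrow> real) \<Rightarrow> bool" where
  "same_side B n x y \<longleftrightarrow> (\<forall>i<n. \<forall>j<n. \<forall>a\<in>B. x i - x j < a \<longleftrightarrow> y i - y j < a)"

definition region_of :: "real set \<Rightarrow> nat \<Rightarrow> (nat \<Rightarrow> real) \<Rightarrow> (nat \<Rightarrow> real) set" where
  "region_of B n x = {y \<in> diff_complement B n. same_side B n x y}"

lemma diff_complement_iff:
  "x \<in> diff_complement B n \<longleftrightarrow> x \<in> Rn n \<and> (\<forall>i<n. \<forall>j<n. i \<noteq> j \<longrightarrow> x i - x j \<notin> B)"
  unfolding diff_complement_def diff_arrangement_def by auto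

lemma same_side_refl: "same_side B n x x"
  and same_side_sym: "same_side B n x y \<Longrightarrow> same_side B n y x"
  and same_side_trans: "same_side B n x y \<Longrightarrow> same_side B n y z \<Longrightarrow> same_side B n x z"
  unfolding same_side_def by auto

lemma self_in_region_of: "x \<in> diff_complement B n \<Longrightarrow> x \<in> region_of B n x"
  by (simp add: region_of_def same_side_refl)

lemma region_of_eq_iff:
  assumes "x \<in> diff_complement B n" "x' \<in> diff_complement B n"
  shows "region_of B n x = region_of B n x' \<longleftrightarrow> same_side B n x x'"
  using assms self_in_region_of[of x' B n] same_side_sym same_side_trans
  unfolding region_of_def by blast

lemma convex_comb_same_side:
  fixes u v a t :: real
  assumes "u < a \<longleftrightarrow> v < a" "u \<noteq> a" "v \<noteq> a" "0 \<le> t" "t \<le> 1"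
  shows "(1 - t) * u + t * v < a \<longleftrightarrow> u < a" "(1 - t) * u + t * v \<noteq> a"
  using convex_bound_lt[of u a v "1 - t" t] convex_bound_lt[of "-u" "-a" "-v" "1 - t" t] assms
  by (cases "u < a"; force)+

lemma region_of_convex:
  assumes y: "y \<in> region_of B n x" and z: "z \<in> region_of B n x" and t: "0 \<le> t" "t \<le> 1"
  shows "(\<lambda>i. (1 - t) * y i + t * z i) \<in> region_of B n x"
proof -
  let ?w = "\<lambda>i. (1 - t) * y i + t * z i"
  have diff: "?w i - ?w j = (1 - t) * (y i - y j) + t * (z i - z j)" for i j
    by (simp add: algebra_simps)
  have sides: "?w i - ?w j < a \<longleftrightarrow> x i - x j < a" "?w i - ?w j \<noteq> a"
    if "i < n" "j < n" "i \<noteq> j" "a \<in> B" for i j a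
  proof -
    have "y i - y j < a \<longleftrightarrow> x i - x j < a" "z i - z j < a \<longleftrightarrow> x i - x j < a"
      "y i - y j \<noteq> a" "z i - z j \<noteq> a"
      using y z that unfolding region_of_def same_side_def diff_complement_iff by auto
    then show "?w i - ?w j < a \<longleftrightarrow> x i - x j < a" "?w i - ?w j \<noteq> a"
      using convex_comb_same_side[of "y i - y j" a "z i - z j" t] t unfolding diff by auto
  qed
  have "?w \<in> Rn n" using y z by (auto simp: region_of_def diff_complement_iff Rn_def)
  moreover have "same_side B n x ?w"
    unfolding same_side_def
  proof (intro allI impI ballI)
    fix i j a assume "i < n" "j < n" "a \<in> B"
    then show "x i - x j < a \<longleftrightarrow> ?w i - ?w j < a" using sides(1) by (cases "i = j") auto
  qed
  ultimately show ?thesis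
    unfolding region_of_def diff_complement_iff using sides(2) by blast
qed

lemma connected_region_of: "connected (region_of B n x)"
proof (rule path_connected_imp_connected, unfold path_connected_def, intro ballI)
  fix y z assume y: "y \<in> region_of B n x" and z: "z \<in> region_of B n x"
  define g where "g = (\<lambda>t::real. \<lambda>i. (1 - t) * y i + t * z i)"
  have "path g" unfolding path_def g_def
    by (intro continuous_on_coordinatewise_then_product continuous_intros)
  moreover have "path_image g \<subseteq> region_of B n x"
    unfolding path_image_def g_def using region_of_convex[OF y z] by auto
  moreover have "pathstart g = y" "pathfinish g = z"
    by (simp_all add: pathstart_def pathfinish_def g_def)
  ultimately show "\<exists>g. path g \<and> path_image g \<subseteq> region_of B n x \<and> pathstart g = y \<and> pathfinish g = z"
    by blast
qed

lemma connected_same_side_of_level: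
  fixes f :: "'a::topological_space \<Rightarrow> real"
  assumes "connected C" "continuous_on C f" "x \<in> C" "y \<in> C" "\<forall>z\<in>C. f z \<noteq> a"
  shows "f x < a \<longleftrightarrow> f y < a"
proof -
  have "connected (f ` C)" using assms(1,2) by (rule connected_continuous_image[rotated])
  then show ?thesis using assms(3-5) connectedD_interval[of "f ` C" "f x" "f y" a]
    connectedD_interval[of "f ` C" "f y" "f x" a] by force
qed

lemma connected_subset_region_of:
  assumes "connected C" "C \<subseteq> diff_complement B n" "x \<in> C"
  shows "C \<subseteq> region_of B n x"
proof
  fix y assume "y \<in> C"
  have "x i - x j < a \<longleftrightarrow> y i - y j < a" if "i < n" "j < n" "a \<in> B" for i j a
  proof (cases "i = j")
    case False
    have "\<forall>z\<in>C. z i - z j \<noteq> a" using assms(2) that False by (auto simp: diff_complement_iff)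
    moreover have "continuous_on C (\<lambda>z. z i - z j)"
      by (intro continuous_intros continuous_on_product_then_coordinatewise[OF continuous_on_id])
    ultimately show ?thesis
      using connected_same_side_of_level[OF assms(1) _ assms(3) \<open>y \<in> C\<close>] by blast
  qed simp
  then show "y \<in> region_of B n x"
    using \<open>y \<in> C\<close> assms(2) unfolding region_of_def same_side_def by blast
qed

lemma connected_component_diff_complement:
  assumes "x \<in> diff_complement B n"
  shows "connected_component_set (diff_complement B n) x = region_of B n x"
  using assms by (intro connected_component_unique self_in_region_of connected_region_of
      connected_subset_region_of) (auto simp: region_of_def)

lemma regions_diff_arrangement: "regions (diff_arrangement B) n = region_of B n ` diff_complement B n"
proof -
  have "regions (diff_arrangement B) n
      = connected_component_set (diff_complement B n) ` diff_complement B n"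
    unfolding regions_def diff_complement_def by auto
  also have "\<dots> = region_of B n ` diff_complement B n"
    by (rule image_cong[OF refl connected_component_diff_complement])
  finally show ?thesis .
qed

lemma finite_regions_of:
  assumes "finite B" shows "finite (region_of B n ` diff_complement B n)"
proof -
  let ?P = "\<lambda>y::nat\<Rightarrow>real. {(i, j, a). i < n \<and> j < n \<and> a \<in> B \<and> y i - y j < a}"
  have "region_of B n x = {y \<in> diff_complement B n. ?P y = ?P x}" for x
    unfolding region_of_def same_side_def by (auto simp: set_eq_iff)
  then have "region_of B n ` diff_complement B n
      \<subseteq> (\<lambda>Q. {y \<in> diff_complement B n. ?P y = Q}) ` Pow ({..<n} \<times> {..<n} \<times> B)"
    by auto
  then show ?thesis by (rule finite_subset) (use assms in auto)
qed

section \<open>Finite chains of sets\<close>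

definition chain_rank :: "'a set set \<Rightarrow> 'a set \<Rightarrow> nat" where
  "chain_rank C U = card {V \<in> C. V \<subset> U}"

definition chain_nth :: "'a set set \<Rightarrow> nat \<Rightarrow> 'a set" where
  "chain_nth C m = (THE U. U \<in> C \<and> chain_rank C U = m)"

context
  fixes C :: "'a set set"
  assumes finite_C: "finite C" and chain_C: "chain\<^sub>\<subseteq> C"
begin

lemma chain_rank_strict_mono: "U \<in> C \<Longrightarrow> V \<in> C \<Longrightarrow> U \<subset> V \<Longrightarrow> chain_rank C U < chain_rank C V"
  unfolding chain_rank_def by (rule psubset_card_mono) (use finite_C in auto)

lemma chain_rank_less_card: "U \<in> C \<Longrightarrow> chain_rank C U < card C"
  unfolding chain_rank_def by (rule psubset_card_mono) (use finite_C in auto)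

lemma chain_rank_le_iff: "U \<in> C \<Longrightarrow> V \<in> C \<Longrightarrow> chain_rank C U \<le> chain_rank C V \<longleftrightarrow> U \<subseteq> V"
  using chain_rank_strict_mono chain_C unfolding chain_subset_def
  by (metis leD order.order_iff_strict psubsetI)

lemma inj_on_chain_rank: "inj_on (chain_rank C) C"
  by (rule inj_onI) (metis chain_rank_le_iff order.refl subset_antisym)

lemma chain_rank_image: "chain_rank C ` C = {..<card C}"
proof -
  have "chain_rank C ` C \<subseteq> {..<card C}" using chain_rank_less_card by auto
  moreover have "card (chain_rank C ` C) = card {..<card C}"
    using card_image[OF inj_on_chain_rank] by simp
  ultimately show ?thesis by (intro card_subset_eq) auto
qed

lemma chain_nth:
  assumes "m < card C" shows "chain_nth C m \<in> C" "chain_rank C (chain_nth C m) = m"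
proof -
  obtain U where U: "U \<in> C" "chain_rank C U = m"
    using assms chain_rank_image by (metis imageE lessThan_iff)
  then have "\<exists>!U. U \<in> C \<and> chain_rank C U = m"
    using inj_on_chain_rank by (auto dest: inj_onD)
  then show "chain_nth C m \<in> C" "chain_rank C (chain_nth C m) = m"
    unfolding chain_nth_def by (metis (mono_tags, lifting) theI')+
qed

lemma chain_nth_chain_rank: "U \<in> C \<Longrightarrow> chain_nth C (chain_rank C U) = U"
  using chain_nth[OF chain_rank_less_card] inj_on_chain_rank by (auto dest: inj_onD)

lemma chain_nth_mono: "m \<le> m' \<Longrightarrow> m' < card C \<Longrightarrow> chain_nth C m \<subseteq> chain_nth C m'"
  using chain_rank_le_iff chain_nth by (metis le_less_trans)

lemma chain_nth_strict_mono: "m < m' \<Longrightarrow> m' < card C \<Longrightarrow> chain_nth C m \<subset> chain_nth C m'"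
  using chain_nth_mono chain_nth(2) by (metis less_imp_le_nat less_trans nat_neq_iff psubsetI)

lemma chain_nth_least: "{} \<in> C \<Longrightarrow> chain_nth C 0 = {}"
  using chain_nth_chain_rank[of "{}"] by (simp add: chain_rank_def)

lemma chain_nth_greatest:
  assumes "F \<in> C" "\<forall>U\<in>C. U \<subseteq> F" shows "chain_nth C (card C - 1) = F"
proof -
  have "{V \<in> C. V \<subset> F} = C - {F}" using assms by auto
  then have "chain_rank C F = card C - 1"
    unfolding chain_rank_def using assms(1) finite_C by simp
  then show ?thesis using chain_nth_chain_rank[OF assms(1)] by simp
qed

lemma card_chain_rank_filter: "card {U \<in> C. P (chain_rank C U)} = card {m. m < card C \<and> P m}"
proof -
  have "chain_rank C ` {U \<in> C. P (chain_rank C U)} = {m \<in> chain_rank C ` C. P m}" by auto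
  also have "\<dots> = {m. m < card C \<and> P m}" by (simp add: chain_rank_image)
  finally show ?thesis
    using card_image[OF inj_on_subset[OF inj_on_chain_rank]] by (metis (no_types, lifting) mem_Collect_eq subsetI)
qed

end

section \<open>Gap cuts\<close>

definition gap_cuts :: "real \<Rightarrow> nat \<Rightarrow> (nat \<Rightarrow> real) \<Rightarrow> nat set set" where
  "gap_cuts c n x = {T. T \<subseteq> {..<n} \<and> (\<forall>i\<in>T. \<forall>j\<in>{..<n} - T. c < x j - x i)}"

lemma finite_gap_cuts: "finite (gap_cuts c n x)"
  by (rule finite_subset[of _ "Pow {..<n}"]) (auto simp: gap_cuts_def)

lemma empty_in_gap_cuts: "{} \<in> gap_cuts c n x"
  and lessThan_in_gap_cuts: "{..<n} \<in> gap_cuts c n x"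
  by (auto simp: gap_cuts_def)

lemma chain_gap_cuts:
  assumes "0 \<le> c" shows "chain\<^sub>\<subseteq> (gap_cuts c n x)"
  unfolding chain_subset_def
proof (intro ballI)
  fix U V assume U: "U \<in> gap_cuts c n x" and V: "V \<in> gap_cuts c n x"
  show "U \<subseteq> V \<or> V \<subseteq> U"
  proof (rule ccontr)
    assume "\<not> (U \<subseteq> V \<or> V \<subseteq> U)"
    then obtain i j where "i \<in> U" "i \<notin> V" "j \<in> V" "j \<notin> U" by blast
    then have "c < x j - x i" "c < x i - x j" using U V by (auto simp: gap_cuts_def)
    then show False using assms by linarith
  qed
qed

lemma gap_cut_separating:
  assumes c: "0 < c" and q: "q < n" and r: "r < n" and far: "y q + c * n < y r"
  shows "\<exists>U\<in>gap_cuts c n y. q \<in> U \<and> r \<notin> U"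
proof -
  \<comment> \<open>Pigeonhole: fewer than n coordinates lie in the n intervals \<open>(y q + (m - 1) c, y q + m c]\<close>,
    and an empty interval splits the coordinates into a gap cut.\<close>
  define P where "P = {p. p < n \<and> y q < y p \<and> y p \<le> y q + c * n}"
  define slot where "slot p = nat \<lceil>(y p - y q) / c\<rceil>" for p
  have "slot ` P \<subseteq> {1..n}"
  proof
    fix m assume "m \<in> slot ` P"
    then obtain p where "p \<in> P" "m = slot p" by blast
    then have "0 < (y p - y q) / c" "(y p - y q) / c \<le> n"
      using c by (auto simp: P_def field_simps)
    then show "m \<in> {1..n}" unfolding \<open>m = slot p\<close> slot_def by (auto simp: le_nat_iff ceiling_le_iff)
  qed
  moreover have "card (slot ` P) < n"
  proof -
    have "card P \<le> card ({..<n} - {q})" by (rule card_mono) (auto simp: P_def)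
    also have "\<dots> < n" using q by simp
    finally have "card P < n" .
    then show ?thesis using card_image_le[of P slot] by (simp add: P_def)
  qed
  moreover have "finite P" by (rule finite_subset[of _ "{..<n}"]) (auto simp: P_def)
  ultimately obtain m where m: "m \<in> {1..n}" "m \<notin> slot ` P"
    using card_mono[of "slot ` P" "{1..n}"] by fastforce
  define U where "U = {p. p < n \<and> y p \<le> y q + c * (real m - 1)}"
  have "U \<in> gap_cuts c n y"
    unfolding gap_cuts_def
  proof (intro CollectI conjI ballI)
    fix i j assume i: "i \<in> U" and j: "j \<in> {..<n} - U"
    have "y q + c * m < y j"
    proof (rule ccontr)
      assume "\<not> ?thesis"
      then have hi: "y j - y q \<le> c * m" by simp
      have lo: "c * (real m - 1) < y j - y q" using j by (auto simp: U_def)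
      have "0 \<le> c * (real m - 1)" "c * m \<le> c * n" using m c by auto
      then have "j \<in> P" using lo hi j by (auto simp: P_def)
      moreover have "\<lceil>(y j - y q) / c\<rceil> = int m"
        using lo hi c by (intro ceiling_unique) (simp_all add: field_simps)
      then have "slot j = m" by (simp add: slot_def)
      ultimately have "m \<in> slot ` P" by blast
      then show False using m(2) by blast
    qed
    then show "c < y j - y i" using i by (auto simp: U_def algebra_simps)
  qed (auto simp: U_def)
  moreover have "q \<in> U" using q m c by (simp add: U_def)
  moreover have "c * (real m - 1) \<le> c * n" using m c by simp
  then have "r \<notin> U" using far unfolding U_def mem_Collect_eq by linarith
  ultimately show ?thesis by blast
qed

lemma gap_cut_close:
  assumes "0 < c" "q < n" "r < n" "\<forall>U\<in>gap_cuts c n y. q \<in> U \<longleftrightarrow> r \<in> U"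
  shows "\<bar>y r - y q\<bar> \<le> c * n"
  using gap_cut_separating[of c q n r y] gap_cut_separating[of c r n q y] assms by force

section \<open>The level of a region\<close>

locale gap_arrangement =
  fixes B :: "real set" and c :: real
  assumes finite_B: "finite B" and c_in_B: "c \<in> B" and c_pos: "0 < c"
    and B_bounds: "\<forall>a\<in>B. 0 \<le> a \<and> a \<le> c"
begin

definition gap_count :: "nat \<Rightarrow> (nat \<Rightarrow> real) \<Rightarrow> nat" where
  "gap_count n x = card (gap_cuts c n x) - 1"

definition nth_cut :: "nat \<Rightarrow> (nat \<Rightarrow> real) \<Rightarrow> nat \<Rightarrow> nat set" where
  "nth_cut n x m = chain_nth (gap_cuts c n x) m"

definition block :: "nat \<Rightarrow> (nat \<Rightarrow> real) \<Rightarrow> nat \<Rightarrow> nat set" where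
  "block n x m = nth_cut n x (Suc m) - nth_cut n x m"

lemma finite_chain_gap_cuts: "finite (gap_cuts c n x)" "chain\<^sub>\<subseteq> (gap_cuts c n x)"
  using finite_gap_cuts chain_gap_cuts c_pos by auto

lemma card_gap_cuts: "card (gap_cuts c n x) = Suc (gap_count n x)"
proof -
  have "card (gap_cuts c n x) \<noteq> 0"
    using card_0_eq[OF finite_gap_cuts, of c n x] empty_in_gap_cuts[of c n x] by blast
  then show ?thesis unfolding gap_count_def by simp
qed

lemma nth_cut_in_gap_cuts: "m \<le> gap_count n x \<Longrightarrow> nth_cut n x m \<in> gap_cuts c n x"
  and chain_rank_nth_cut: "m \<le> gap_count n x \<Longrightarrow> chain_rank (gap_cuts c n x) (nth_cut n x m) = m"
  using chain_nth[OF finite_chain_gap_cuts] card_gap_cuts unfolding nth_cut_def by simp_all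

lemma nth_cut_chain_rank:
  "U \<in> gap_cuts c n x \<Longrightarrow> nth_cut n x (chain_rank (gap_cuts c n x) U) = U"
  unfolding nth_cut_def by (rule chain_nth_chain_rank[OF finite_chain_gap_cuts])

lemma chain_rank_gap_cut_le:
  assumes "U \<in> gap_cuts c n x" shows "chain_rank (gap_cuts c n x) U \<le> gap_count n x"
  using chain_rank_less_card[OF finite_chain_gap_cuts assms] card_gap_cuts[of n x] by simp

lemma nth_cut_0: "nth_cut n x 0 = {}"
  unfolding nth_cut_def by (rule chain_nth_least[OF finite_chain_gap_cuts empty_in_gap_cuts])

lemma nth_cut_gap_count: "nth_cut n x (gap_count n x) = {..<n}"
  using chain_nth_greatest[OF finite_chain_gap_cuts lessThan_in_gap_cuts] card_gap_cuts
  unfolding nth_cut_def by (simp add: gap_cuts_def)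

lemma nth_cut_mono: "m \<le> m' \<Longrightarrow> m' \<le> gap_count n x \<Longrightarrow> nth_cut n x m \<subseteq> nth_cut n x m'"
  using chain_nth_mono[OF finite_chain_gap_cuts] card_gap_cuts unfolding nth_cut_def by simp

lemma nth_cut_strict_mono: "m < m' \<Longrightarrow> m' \<le> gap_count n x \<Longrightarrow> nth_cut n x m \<subset> nth_cut n x m'"
  using chain_nth_strict_mono[OF finite_chain_gap_cuts] card_gap_cuts unfolding nth_cut_def by simp

lemma nth_cut_subset: "m \<le> gap_count n x \<Longrightarrow> nth_cut n x m \<subseteq> {..<n}"
  using nth_cut_in_gap_cuts by (auto simp: gap_cuts_def)

lemma block_subset: "m < gap_count n x \<Longrightarrow> block n x m \<subseteq> {..<n}"
  unfolding block_def using nth_cut_subset[of "Suc m" n x] by auto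

lemma block_nonempty: "m < gap_count n x \<Longrightarrow> block n x m \<noteq> {}"
  unfolding block_def using nth_cut_strict_mono[of m "Suc m" n x] by auto

lemma block_disjoint:
  assumes "i \<in> block n x m" "i \<in> block n x m'" "m < gap_count n x" "m' < gap_count n x"
  shows "m = m'"
proof (rule ccontr)
  assume "m \<noteq> m'"
  moreover have "max m m' \<le> gap_count n x" using assms(3,4) by simp
  ultimately have "nth_cut n x (Suc (min m m')) \<subseteq> nth_cut n x (max m m')"
    by (intro nth_cut_mono) auto
  then have "block n x (min m m') \<inter> block n x (max m m') = {}"
    unfolding block_def by auto
  then show False using assms(1,2) by (cases "m \<le> m'") (auto simp: min_def max_def)
qed

lemma block_cover:
  assumes "i < n" shows "\<exists>m<gap_count n x. i \<in> block n x m"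
proof -
  define m' where "m' = (LEAST m. i \<in> nth_cut n x m)"
  have "i \<in> nth_cut n x (gap_count n x)" using assms nth_cut_gap_count by simp
  then have m': "i \<in> nth_cut n x m'" "m' \<le> gap_count n x"
    unfolding m'_def by (auto intro: LeastI Least_le)
  then obtain m where m: "m' = Suc m" using nth_cut_0 by (cases m') auto
  then have "i \<notin> nth_cut n x m" using not_less_Least[of m "\<lambda>m. i \<in> nth_cut n x m"] unfolding m'_def by auto
  then show ?thesis using m m' unfolding block_def by (intro exI[of _ m]) auto
qed

lemma block_inside_or_outside_cut:
  assumes "U \<in> gap_cuts c n x" "m < gap_count n x"
  shows "block n x m \<subseteq> U \<or> block n x m \<inter> U = {}"
proof -
  define r where "r = chain_rank (gap_cuts c n x) U"
  have U: "U = nth_cut n x r" "r \<le> gap_count n x"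
    using nth_cut_chain_rank[OF assms(1)] chain_rank_gap_cut_le[OF assms(1)] unfolding r_def by auto
  show ?thesis
  proof (cases "r \<le> m")
    case True
    then have "U \<subseteq> nth_cut n x m" using U nth_cut_mono[of r m n x] assms(2) by auto
    then show ?thesis unfolding block_def by auto
  next
    case False
    then have "nth_cut n x (Suc m) \<subseteq> U" using U nth_cut_mono[of "Suc m" r n x] by auto
    then show ?thesis unfolding block_def by auto
  qed
qed

lemma sum_indicator_block:
  fixes f :: "nat \<Rightarrow> real"
  assumes "i \<in> block n x m" "m < gap_count n x"
  shows "(\<Sum>m'<gap_count n x. f m' * indicator (block n x m') i) = f m"
proof -
  have "(\<Sum>m'<gap_count n x. f m' * indicator (block n x m') i)
      = (\<Sum>m'<gap_count n x. if m' = m then f m else 0)"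
    by (rule sum.cong) (use assms block_disjoint in \<open>auto simp: indicator_def\<close>)
  then show ?thesis using assms(2) by simp
qed

lemma gap_cuts_eq_if_same_side:
  assumes x: "x \<in> diff_complement B n" and y: "y \<in> diff_complement B n"
    and xy: "same_side B n x y"
  shows "gap_cuts c n y = gap_cuts c n x"
proof -
  have "c < y j - y i \<longleftrightarrow> c < x j - x i" if "i < n" "j < n" "i \<noteq> j" for i j
  proof -
    have "x j - x i \<noteq> c" "y j - y i \<noteq> c" using x y that c_in_B by (auto simp: diff_complement_iff)
    moreover have "x j - x i < c \<longleftrightarrow> y j - y i < c" using xy that c_in_B by (auto simp: same_side_def)
    ultimately show ?thesis by linarith
  qed
  then show ?thesis unfolding gap_cuts_def
  proof (intro Collect_cong conj_cong refl)
    fix T assume "T \<subseteq> {..<n}"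
    then show "(\<forall>i\<in>T. \<forall>j\<in>{..<n} - T. c < y j - y i) \<longleftrightarrow> (\<forall>i\<in>T. \<forall>j\<in>{..<n} - T. c < x j - x i)"
      using \<open>\<And>i j. \<lbrakk>i < n; j < n; i \<noteq> j\<rbrakk> \<Longrightarrow> _\<close> by (intro ball_cong refl) auto
  qed
qed

definition block_span :: "nat \<Rightarrow> (nat \<Rightarrow> real) \<Rightarrow> (nat \<Rightarrow> real) set" where
  "block_span n x = {(\<lambda>i. \<Sum>m<gap_count n x. a m * indicator (block n x m) i) | a. True}"

lemma lin_subspace_dim_block_span: "lin_subspace_dim n (gap_count n x) (block_span n x)"
  unfolding lin_subspace_dim_def
proof (intro exI[of _ "\<lambda>m. indicator (block n x m)"] conjI)
  show "\<forall>m<gap_count n x. indicator (block n x m) \<in> Rn n"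
  proof (intro allI impI)
    fix m assume "m < gap_count n x"
    then show "indicator (block n x m) \<in> Rn n"
      using block_subset[of m n x] by (auto simp: Rn_def indicator_def)
  qed
  show "\<forall>a. (\<lambda>i. \<Sum>m<gap_count n x. a m * indicator (block n x m) i) = (\<lambda>_. 0 :: real)
      \<longrightarrow> (\<forall>m<gap_count n x. a m = 0)"
  proof (intro allI impI)
  fix a :: "nat \<Rightarrow> real" and m assume zero: "(\<lambda>i. \<Sum>m<gap_count n x. a m * indicator (block n x m) i) = (\<lambda>_. 0)"
    and m: "m < gap_count n x"
  obtain i where "i \<in> block n x m" using block_nonempty[OF m] by blast
  then show "a m = 0" using fun_cong[OF zero, of i] sum_indicator_block[of i n x m a] m by simp
  qed
qed (simp add: block_span_def)

lemma region_of_near_block_span: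
  assumes x: "x \<in> diff_complement B n" and y: "y \<in> region_of B n x"
  shows "(INF v\<in>block_span n x. enorm n (\<lambda>i. y i - v i)) \<le> c * n * sqrt n"
proof -
  let ?k = "gap_count n x"
  have cuts_y: "gap_cuts c n y = gap_cuts c n x"
    using gap_cuts_eq_if_same_side[OF x] y by (auto simp: region_of_def)
  define rep where "rep m = (SOME i. i \<in> block n x m)" for m
  have rep: "rep m \<in> block n x m" if "m < ?k" for m
    unfolding rep_def using block_nonempty[OF that] by (auto intro: someI_ex)
  \<comment> \<open>On each block, replace the coordinates of y by the coordinate at a representative.\<close>
  define v where "v i = (\<Sum>m<?k. y (rep m) * indicator (block n x m) i)" for i
  have "\<bar>y i - v i\<bar> \<le> c * n" if i: "i < n" for i
  proof -
    obtain m where m: "m < ?k" "i \<in> block n x m" using block_cover[OF i] by blast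
    have "rep m \<in> U \<longleftrightarrow> i \<in> U" if "U \<in> gap_cuts c n y" for U
      using block_inside_or_outside_cut[of U n x m] that m rep[OF m(1)] unfolding cuts_y by auto
    moreover have "rep m < n" using rep[OF m(1)] block_subset[OF m(1)] by auto
    ultimately have "\<bar>y i - y (rep m)\<bar> \<le> c * n" using gap_cut_close[OF c_pos _ i] by simp
    then show ?thesis using sum_indicator_block[OF m(2,1)] unfolding v_def by simp
  qed
  then have "enorm n (\<lambda>i. y i - v i) \<le> c * n * sqrt n" using c_pos by (intro enorm_le) auto
  moreover have "v \<in> block_span n x"
    unfolding v_def block_span_def by (rule CollectI, rule exI[of _ "\<lambda>m. y (rep m)"]) simp
  moreover have "bdd_below ((\<lambda>v. enorm n (\<lambda>i. y i - v i)) ` block_span n x)"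
    by (rule bdd_belowI[of _ 0]) (auto simp: enorm_nonneg)
  ultimately show ?thesis by (intro cINF_lower2[of _ _ v])
qed

lemma shift_above_cut_in_region_of:
  assumes x: "x \<in> diff_complement B n" and m: "m \<le> gap_count n x" and t: "0 \<le> t"
  shows "(\<lambda>i. x i + t * indicator ({..<n} - nth_cut n x m) i) \<in> region_of B n x"
proof -
  define y where "y i = x i + t * indicator ({..<n} - nth_cut n x m) i" for i
  have U: "nth_cut n x m \<in> gap_cuts c n x" using nth_cut_in_gap_cuts[OF m] .
  have sides: "y i - y j \<notin> B \<and> (\<forall>a\<in>B. x i - x j < a \<longleftrightarrow> y i - y j < a)"
    if ij: "i < n" "j < n" "i \<noteq> j" for i j
  proof -
    have xn: "x i - x j \<notin> B" using x ij by (auto simp: diff_complement_iff)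
    consider "i \<in> nth_cut n x m \<longleftrightarrow> j \<in> nth_cut n x m"
      | "i \<notin> nth_cut n x m" "j \<in> nth_cut n x m" | "i \<in> nth_cut n x m" "j \<notin> nth_cut n x m"
      by blast
    then show ?thesis
    proof cases
      case 1
      then have "y i - y j = x i - x j" using ij unfolding y_def by (auto simp: indicator_def)
      then show ?thesis using xn by simp
    next
      case 2
      then have "c < x i - x j" "y i - y j = x i - x j + t"
        using U ij unfolding gap_cuts_def y_def by (auto simp: indicator_def)
      then show ?thesis using t B_bounds by force
    next
      case 3
      then have "c < x j - x i" "y i - y j = x i - x j - t"
        using U ij unfolding gap_cuts_def y_def by (auto simp: indicator_def)
      then show ?thesis using t B_bounds c_pos by force
    qed
  qed
  have "y \<in> Rn n" using x unfolding y_def diff_complement_iff Rn_def by auto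
  moreover have "same_side B n x y"
    unfolding same_side_def
  proof (intro allI impI ballI)
    fix i j a assume "i < n" "j < n" "a \<in> B"
    then show "x i - x j < a \<longleftrightarrow> y i - y j < a" using sides by (cases "i = j") auto
  qed
  ultimately show ?thesis using sides unfolding region_of_def diff_complement_iff y_def by blast
qed

lemma annihilating_block_functional:
  assumes W: "lin_subspace_dim n l W" and l: "l < gap_count n x"
  shows "\<exists>a. (\<exists>m<gap_count n x. a m \<noteq> 0) \<and>
    (\<forall>v\<in>W. (\<Sum>i<n. (\<Sum>m<gap_count n x. a m * indicator (block n x m) i) * v i) = 0)"
proof -
  let ?k = "gap_count n x"
  obtain u :: "nat \<Rightarrow> nat \<Rightarrow> real" where W_eq: "W = {(\<lambda>i. \<Sum>j<l. d j * u j i) | d. True}"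
    using W unfolding lin_subspace_dim_def by blast
  define g where "g m j = (\<Sum>i<n. indicator (block n x m) i * u j i)" for m j
  obtain a where a: "\<exists>m\<in>{..<?k}. a m \<noteq> 0" "\<forall>j<l. (\<Sum>m\<in>{..<?k}. a m * g m j) = 0"
    using homogeneous_system_nontrivial_solution[of "{..<?k}" l g] l by auto
  define w where "w i = (\<Sum>m<?k. a m * indicator (block n x m) i)" for i
  have swap_outer: "(\<Sum>i<n. f i * (\<Sum>j<l. d j * u j i)) = (\<Sum>j<l. d j * (\<Sum>i<n. f i * u j i))"
    for f d :: "nat \<Rightarrow> real"
    by (simp add: sum_distrib_left sum_distrib_right algebra_simps sum.swap[of _ "{..<n}"])
  have swap_inner: "(\<Sum>i<n. (\<Sum>m<?k. a m * b m i) * u j i) = (\<Sum>m<?k. a m * (\<Sum>i<n. b m i * u j i))"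
    for b :: "nat \<Rightarrow> nat \<Rightarrow> real" and j
    by (simp add: sum_distrib_left sum_distrib_right algebra_simps sum.swap[of _ "{..<n}"])
  have "(\<Sum>i<n. w i * v i) = 0" if "v \<in> W" for v
  proof -
    obtain d where v: "v = (\<lambda>i. \<Sum>j<l. d j * u j i)" using \<open>v \<in> W\<close> W_eq by blast
    show ?thesis
      using swap_outer[of w d] swap_inner[of "\<lambda>m. indicator (block n x m)"] a(2)
      unfolding v w_def g_def by simp
  qed
  then show ?thesis using a(1) unfolding w_def by auto
qed

lemma exists_unbalanced_cut:
  fixes a :: "nat \<Rightarrow> real"
  assumes "\<exists>m<gap_count n x. a m \<noteq> 0"
  shows "\<exists>m<gap_count n x.
    (\<Sum>i\<in>{..<n} - nth_cut n x m. \<Sum>m'<gap_count n x. a m' * indicator (block n x m') i) \<noteq> 0"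
proof (rule ccontr)
  let ?k = "gap_count n x"
  define w where "w i = (\<Sum>m<?k. a m * indicator (block n x m) i)" for i
  define S where "S m = (\<Sum>i\<in>{..<n} - nth_cut n x m. w i)" for m
  assume "\<not> ?thesis"
  then have S0: "S m = 0" if "m \<le> ?k" for m
    using that nth_cut_gap_count unfolding S_def w_def by (cases "m = ?k") auto
  \<comment> \<open>Telescoping: the part of the sum above the m-th cut is the m-th block plus the part above the next cut.\<close>
  have "a m = 0" if m: "m < ?k" for m
  proof -
    have split: "{..<n} - nth_cut n x m = block n x m \<union> ({..<n} - nth_cut n x (Suc m))"
      using nth_cut_mono[of m "Suc m" n x] nth_cut_subset[of "Suc m" n x] m unfolding block_def by auto
    have "finite (block n x m)" using finite_subset[OF block_subset[OF m]] by simp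
    then have "S m = (\<Sum>i\<in>block n x m. w i) + S (Suc m)"
      unfolding S_def split by (intro sum.union_disjoint) (auto simp: block_def)
    also have "(\<Sum>i\<in>block n x m. w i) = a m * card (block n x m)"
      using sum_indicator_block[OF _ m] by (simp add: w_def)
    finally have "a m * card (block n x m) = 0" using S0 m by simp
    moreover have "card (block n x m) \<noteq> 0"
      using block_nonempty[OF m] finite_subset[OF block_subset[OF m]] by simp
    ultimately show ?thesis by simp
  qed
  then show False using assms by blast
qed

lemma region_of_not_near_smaller_subspace:
  assumes x: "x \<in> diff_complement B n" and W: "lin_subspace_dim n l W" and l: "l < gap_count n x"
  shows "\<not> region_of B n x \<subseteq> {y. (INF v\<in>W. enorm n (\<lambda>i. y i - v i)) \<le> r}"
proof
  assume near: "region_of B n x \<subseteq> {y. (INF v\<in>W. enorm n (\<lambda>i. y i - v i)) \<le> r}"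
  let ?k = "gap_count n x"
  obtain a where a: "\<exists>m<?k. a m \<noteq> 0"
    and kernel: "\<forall>v\<in>W. (\<Sum>i<n. (\<Sum>m<?k. a m * indicator (block n x m) i) * v i) = 0"
    using annihilating_block_functional[OF W l] by blast
  define w where "w i = (\<Sum>m<?k. a m * indicator (block n x m) i)" for i
  obtain m where m: "m < ?k" and s: "(\<Sum>i\<in>{..<n} - nth_cut n x m. w i) \<noteq> 0"
    using exists_unbalanced_cut[OF a] unfolding w_def by blast
  define s where "s = (\<Sum>i\<in>{..<n} - nth_cut n x m. w i)"
  define K where "K = (\<Sum>i<n. \<bar>w i\<bar>)"
  \<comment> \<open>Moving the coordinates above the m-th cut far enough stays in the region but drives the functional w beyond its bound near W.\<close>
  define t where "t = (K * (r + 1) + \<bar>\<Sum>i<n. w i * x i\<bar> + 1) / \<bar>s\<bar>"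
  define y where "y i = x i + t * indicator ({..<n} - nth_cut n x m) i" for i
  have "0 \<le> K" unfolding K_def by (simp add: sum_nonneg)
  have "W \<noteq> {}" using W unfolding lin_subspace_dim_def by blast
  have "0 \<le> r"
    using near self_in_region_of[OF x] enorm_nonneg order.trans cINF_greatest[OF \<open>W \<noteq> {}\<close>]
    by (metis (no_types, lifting) mem_Collect_eq subsetD)
  then have t: "0 \<le> t" "t * \<bar>s\<bar> = K * (r + 1) + \<bar>\<Sum>i<n. w i * x i\<bar> + 1"
    using \<open>0 \<le> K\<close> s unfolding t_def s_def by (auto intro!: divide_nonneg_nonneg)
  have "y \<in> region_of B n x"
    unfolding y_def using shift_above_cut_in_region_of[OF x _ t(1)] m by simp
  then have "(INF v\<in>W. enorm n (\<lambda>i. y i - v i)) \<le> r" using near by blast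
  moreover have "\<forall>v\<in>W. (\<Sum>i<n. w i * v i) = 0" using kernel unfolding w_def .
  ultimately have "\<bar>\<Sum>i<n. w i * y i\<bar> \<le> K * (r + 1)"
    using abs_functional_le_near_kernel[OF \<open>W \<noteq> {}\<close>] unfolding K_def by blast
  moreover have "(\<Sum>i<n. w i * y i) = (\<Sum>i<n. w i * x i) + t * s"
  proof -
    have "{..<n} \<inter> {i. i \<notin> nth_cut n x m} = {..<n} - nth_cut n x m" by auto
    then have "(\<Sum>i<n. w i * indicator ({..<n} - nth_cut n x m) i) = s"
      unfolding s_def by (simp add: indicator_def sum.If_cases)
    moreover have "(\<Sum>i<n. w i * y i)
        = (\<Sum>i<n. w i * x i) + t * (\<Sum>i<n. w i * indicator ({..<n} - nth_cut n x m) i)"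
      unfolding y_def by (simp only: distrib_left sum.distrib sum_distrib_left mult.left_commute)
    ultimately show ?thesis by simp
  qed
  ultimately show False using t(2) by (simp add: abs_mult)
qed

lemma level_region_of:
  assumes "x \<in> diff_complement B n" shows "level n (region_of B n x) = gap_count n x"
  unfolding level_def
proof (rule Least_equality)
  have "region_of B n x \<subseteq> {y. (INF v\<in>block_span n x. enorm n (\<lambda>i. y i - v i)) \<le> c * n * sqrt n}"
    using region_of_near_block_span[OF assms] by blast
  moreover have "0 < c * n * sqrt n + 1" using c_pos by (simp add: add_nonneg_pos)
  ultimately show "\<exists>W r. lin_subspace_dim n (gap_count n x) W \<and> r > 0 \<and>
      region_of B n x \<subseteq> {y. (INF v\<in>W. enorm n (\<lambda>i. y i - v i)) \<le> r}"
    using lin_subspace_dim_block_span by fastforce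
qed (use region_of_not_near_smaller_subspace[OF assms] in \<open>meson not_le\<close>)

end

section \<open>Restricting and gluing points\<close>

definition enum_set :: "nat set \<Rightarrow> nat \<Rightarrow> nat" where
  "enum_set T k = sorted_list_of_set T ! k"

definition enum_pos :: "nat set \<Rightarrow> nat \<Rightarrow> nat" where
  "enum_pos T = the_inv_into {..<card T} (enum_set T)"

definition restrict_coords :: "nat set \<Rightarrow> (nat \<Rightarrow> real) \<Rightarrow> nat \<Rightarrow> real" where
  "restrict_coords T x k = (if k < card T then x (enum_set T k) else 0)"

lemma bij_betw_enum_set:
  assumes "finite T" shows "bij_betw (enum_set T) {..<card T} T"
proof -
  let ?xs = "sorted_list_of_set T"
  have "distinct ?xs" "set ?xs = T" "length ?xs = card T" using assms by auto
  then have "inj_on (enum_set T) {..<card T}" "enum_set T ` {..<card T} = T"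
    unfolding enum_set_def using inj_on_nth[of ?xs "{..<card T}"] set_conv_nth[of ?xs] by auto
  then show ?thesis by (simp add: bij_betw_def)
qed

lemma enum_set_in: "finite T \<Longrightarrow> k < card T \<Longrightarrow> enum_set T k \<in> T"
  using bij_betw_enum_set bij_betwE by blast

lemma inj_on_enum_set: "finite T \<Longrightarrow> inj_on (enum_set T) {..<card T}"
  using bij_betw_enum_set bij_betw_imp_inj_on by blast

lemma enum_pos_less: "finite T \<Longrightarrow> i \<in> T \<Longrightarrow> enum_pos T i < card T"
  and enum_set_enum_pos: "finite T \<Longrightarrow> i \<in> T \<Longrightarrow> enum_set T (enum_pos T i) = i"
  unfolding enum_pos_def using bij_betw_enum_set
  by (metis bij_betw_def f_the_inv_into_f lessThan_iff the_inv_into_into order_refl)+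

lemma enum_pos_enum_set: "finite T \<Longrightarrow> k < card T \<Longrightarrow> enum_pos T (enum_set T k) = k"
  unfolding enum_pos_def using inj_on_enum_set by (simp add: the_inv_into_f_f)

lemma restrict_coords_enum_pos: "finite T \<Longrightarrow> i \<in> T \<Longrightarrow> restrict_coords T x (enum_pos T i) = x i"
  by (simp add: restrict_coords_def enum_pos_less enum_set_enum_pos)


lemma restrict_coords_in_diff_complement:
  assumes "T \<subseteq> {..<n}" "x \<in> diff_complement B n"
  shows "restrict_coords T x \<in> diff_complement B (card T)"
proof -
  have fin: "finite T" using assms(1) finite_subset by blast
  have "restrict_coords T x i - restrict_coords T x j \<notin> B"
    if "i < card T" "j < card T" "i \<noteq> j" for i j
  proof -
    have "enum_set T i \<noteq> enum_set T j" using inj_on_enum_set[OF fin] that by (auto dest: inj_onD)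
    moreover have "enum_set T i < n" "enum_set T j < n" using enum_set_in[OF fin] that assms(1) by auto
    ultimately show ?thesis using assms(2) that by (auto simp: restrict_coords_def diff_complement_iff)
  qed
  then show ?thesis by (auto simp: diff_complement_iff Rn_def restrict_coords_def)
qed

lemma same_side_restrict_coords:
  assumes "T \<subseteq> {..<n}" "same_side B n x y"
  shows "same_side B (card T) (restrict_coords T x) (restrict_coords T y)"
  unfolding same_side_def
proof (intro allI impI ballI)
  fix i j a assume ij: "i < card T" "j < card T" "a \<in> B"
  have "enum_set T i < n" "enum_set T j < n"
    using enum_set_in[OF finite_subset[OF assms(1)]] ij assms(1) by auto
  then show "restrict_coords T x i - restrict_coords T x j < a
      \<longleftrightarrow> restrict_coords T y i - restrict_coords T y j < a"
    using assms(2) ij unfolding same_side_def restrict_coords_def by auto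
qed

definition gap_cuts_on :: "real \<Rightarrow> nat set \<Rightarrow> (nat \<Rightarrow> real) \<Rightarrow> nat set set" where
  "gap_cuts_on c S x = {U. U \<subseteq> S \<and> (\<forall>i\<in>U. \<forall>j\<in>S - U. c < x j - x i)}"

lemma gap_cuts_restrict_coords:
  assumes S: "finite S"
  shows "(\<lambda>U. enum_set S ` U) ` gap_cuts c (card S) (restrict_coords S x) = gap_cuts_on c S x"
proof (intro equalityI subsetI)
  fix V assume "V \<in> (\<lambda>U. enum_set S ` U) ` gap_cuts c (card S) (restrict_coords S x)"
  then obtain U where U: "U \<in> gap_cuts c (card S) (restrict_coords S x)" "V = enum_set S ` U" by blast
  have Us: "U \<subseteq> {..<card S}" using U(1) unfolding gap_cuts_def by auto
  have "c < x j - x i" if iV: "i \<in> V" and jV: "j \<in> S - V" for i j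
  proof -
    obtain k where k: "k \<in> U" "i = enum_set S k" using iV U(2) by auto
    define k' where "k' = enum_pos S j"
    have k': "k' < card S" "j = enum_set S k'"
      using jV enum_pos_less[OF S] enum_set_enum_pos[OF S] unfolding k'_def by auto
    then have "k' \<notin> U" using jV U(2) by auto
    then have "c < restrict_coords S x k' - restrict_coords S x k"
      using U(1) k k' Us unfolding gap_cuts_def by auto
    then show ?thesis using k k' Us unfolding restrict_coords_def by auto
  qed
  moreover have "V \<subseteq> S" using U enum_set_in[OF S] unfolding gap_cuts_def by auto
  ultimately show "V \<in> gap_cuts_on c S x" unfolding gap_cuts_on_def by blast
next
  fix V assume V: "V \<in> gap_cuts_on c S x"
  define U where "U = {k. k < card S \<and> enum_set S k \<in> V}"
  have "enum_set S ` U = V"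
  proof (intro equalityI subsetI)
    fix i assume "i \<in> V"
    then have "i \<in> S" using V unfolding gap_cuts_on_def by auto
    then show "i \<in> enum_set S ` U"
      using enum_pos_less[OF S] enum_set_enum_pos[OF S] \<open>i \<in> V\<close> unfolding U_def
      by (intro image_eqI[of _ _ "enum_pos S i"]) auto
  qed (auto simp: U_def)
  moreover have "U \<in> gap_cuts c (card S) (restrict_coords S x)"
    using V enum_set_in[OF S] unfolding gap_cuts_def gap_cuts_on_def U_def restrict_coords_def by auto
  ultimately show "V \<in> (\<lambda>U. enum_set S ` U) ` gap_cuts c (card S) (restrict_coords S x)" by blast
qed

lemma card_gap_cuts_restrict_coords:
  assumes "finite S"
  shows "card (gap_cuts c (card S) (restrict_coords S x)) = card (gap_cuts_on c S x)"
proof -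
  have "inj_on (\<lambda>U. enum_set S ` U) (gap_cuts c (card S) (restrict_coords S x))"
    by (rule inj_on_subset[OF inj_on_image_Pow[OF inj_on_enum_set[OF assms]]]) (auto simp: gap_cuts_def)
  then show ?thesis using gap_cuts_restrict_coords[OF assms] card_image by metis
qed

lemma gap_cuts_on_gap_cut:
  "T \<in> gap_cuts c n x \<Longrightarrow> gap_cuts_on c T x = {U \<in> gap_cuts c n x. U \<subseteq> T}"
  unfolding gap_cuts_on_def gap_cuts_def by blast

lemma card_gap_cuts_on_complement:
  assumes "T \<in> gap_cuts c n x"
  shows "card (gap_cuts_on c ({..<n} - T) x) = card {U \<in> gap_cuts c n x. T \<subseteq> U}"
proof -
  have "(\<lambda>U. T \<union> U) ` gap_cuts_on c ({..<n} - T) x = {U \<in> gap_cuts c n x. T \<subseteq> U}"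
  proof (intro equalityI subsetI)
    fix U assume "U \<in> {U \<in> gap_cuts c n x. T \<subseteq> U}"
    then have "U - T \<in> gap_cuts_on c ({..<n} - T) x" "U = T \<union> (U - T)"
      unfolding gap_cuts_on_def gap_cuts_def by blast+
    then show "U \<in> (\<lambda>U. T \<union> U) ` gap_cuts_on c ({..<n} - T) x" by blast
  qed (use assms in \<open>auto simp: gap_cuts_on_def gap_cuts_def\<close>)
  moreover have "inj_on (\<lambda>U. T \<union> U) (gap_cuts_on c ({..<n} - T) x)"
    by (rule inj_onI) (auto simp: gap_cuts_on_def)
  ultimately show ?thesis using card_image by metis
qed

definition glue :: "nat \<Rightarrow> nat set \<Rightarrow> (nat \<Rightarrow> real) \<Rightarrow> (nat \<Rightarrow> real) \<Rightarrow> real \<Rightarrow> nat \<Rightarrow> real" where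
  "glue n T y z M i =
     (if i < n then if i \<in> T then y (enum_pos T i) else z (enum_pos ({..<n} - T) i) + M else 0)"

lemma restrict_coords_glue_lower:
  assumes "T \<subseteq> {..<n}" "y \<in> Rn (card T)"
  shows "restrict_coords T (glue n T y z M) = y"
proof
  fix k
  have "finite T" using assms(1) finite_subset by blast
  then show "restrict_coords T (glue n T y z M) k = y k"
    using assms enum_set_in[of T k] enum_pos_enum_set[of T k]
    by (auto simp: restrict_coords_def glue_def Rn_def)
qed

lemma restrict_coords_glue_upper:
  "restrict_coords ({..<n} - T) (glue n T y z M)
     = (\<lambda>k. if k < card ({..<n} - T) then z k + M else 0)"
proof
  fix k
  show "restrict_coords ({..<n} - T) (glue n T y z M) k = (if k < card ({..<n} - T) then z k + M else 0)"
    using enum_set_in[of "{..<n} - T" k] enum_pos_enum_set[of "{..<n} - T" k]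
    by (auto simp: restrict_coords_def glue_def)
qed

lemma translate_in_diff_complement:
  assumes "z \<in> diff_complement B m"
  shows "(\<lambda>k. if k < m then z k + M else 0) \<in> diff_complement B m"
    and "same_side B m z (\<lambda>k. if k < m then z k + M else 0)"
  using assms by (auto simp: diff_complement_iff Rn_def same_side_def)

lemma glue_gap_cut:
  assumes T: "T \<subseteq> {..<n}" and M: "c + (\<Sum>k<card T. \<bar>y k\<bar>) + (\<Sum>k<n - card T. \<bar>z k\<bar>) < M"
  shows "T \<in> gap_cuts c n (glue n T y z M)"
  unfolding gap_cuts_def
proof (intro CollectI conjI ballI T)
  let ?S = "{..<n} - T"
  fix i j assume i: "i \<in> T" and j: "j \<in> {..<n} - T"
  have fin: "finite T" "finite ?S" using T finite_subset by auto
  have card_S: "card ?S = n - card T" using T fin(1) by (simp add: card_Diff_subset)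
  have "\<bar>y (enum_pos T i)\<bar> \<le> (\<Sum>k<card T. \<bar>y k\<bar>)"
    using enum_pos_less[OF fin(1) i] by (intro member_le_sum) auto
  moreover have "\<bar>z (enum_pos ?S j)\<bar> \<le> (\<Sum>k<n - card T. \<bar>z k\<bar>)"
    using enum_pos_less[OF fin(2) j] card_S by (intro member_le_sum) auto
  moreover have "glue n T y z M j - glue n T y z M i = z (enum_pos ?S j) + M - y (enum_pos T i)"
    using i j T by (auto simp: glue_def)
  ultimately show "c < glue n T y z M j - glue n T y z M i" using M by linarith
qed

section \<open>Splitting a region\<close>

context gap_arrangement
begin

lemma gap_count_restrict_nth_cut:
  assumes l: "l \<le> gap_count n x"
  defines "T \<equiv> nth_cut n x l"
  shows "gap_count (card T) (restrict_coords T x) = l"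
    and "gap_count (card ({..<n} - T)) (restrict_coords ({..<n} - T) x) = gap_count n x - l"
proof -
  let ?C = "gap_cuts c n x"
  have T: "T \<in> ?C" "chain_rank ?C T = l"
    unfolding T_def using nth_cut_in_gap_cuts[OF l] chain_rank_nth_cut[OF l] by auto
  have "finite T" using nth_cut_subset[OF l] finite_subset unfolding T_def by blast
  have "{U \<in> ?C. U \<subseteq> T} = {U \<in> ?C. chain_rank ?C U \<le> l}"
    using chain_rank_le_iff[OF finite_chain_gap_cuts _ T(1)] T(2) by auto
  moreover have "{m. m < card ?C \<and> m \<le> l} = {..l}" using l card_gap_cuts[of n x] by auto
  ultimately have "card (gap_cuts c (card T) (restrict_coords T x)) = Suc l"
    using card_gap_cuts_restrict_coords[OF \<open>finite T\<close>] gap_cuts_on_gap_cut[OF T(1)]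
      card_chain_rank_filter[OF finite_chain_gap_cuts, where P = "\<lambda>m. m \<le> l"] by simp
  then show "gap_count (card T) (restrict_coords T x) = l" unfolding gap_count_def by simp
  have "{U \<in> ?C. T \<subseteq> U} = {U \<in> ?C. l \<le> chain_rank ?C U}"
    using chain_rank_le_iff[OF finite_chain_gap_cuts T(1)] T(2) by auto
  moreover have "{m. m < card ?C \<and> l \<le> m} = {l..<Suc (gap_count n x)}" using card_gap_cuts[of n x] by auto
  ultimately have "card (gap_cuts c (card ({..<n} - T)) (restrict_coords ({..<n} - T) x))
      = Suc (gap_count n x) - l"
    using card_gap_cuts_restrict_coords[of "{..<n} - T"] card_gap_cuts_on_complement[OF T(1)]
      card_chain_rank_filter[OF finite_chain_gap_cuts, where P = "\<lambda>m. l \<le> m"] by simp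
  then show "gap_count (card ({..<n} - T)) (restrict_coords ({..<n} - T) x) = gap_count n x - l"
    using l unfolding gap_count_def by simp
qed

lemma same_side_of_restrictions:
  assumes T: "T \<in> gap_cuts c n x" "T \<in> gap_cuts c n y"
    and lower: "same_side B (card T) (restrict_coords T x) (restrict_coords T y)"
    and upper: "same_side B (card ({..<n} - T)) (restrict_coords ({..<n} - T) x) (restrict_coords ({..<n} - T) y)"
  shows "same_side B n x y"
  unfolding same_side_def
proof (intro allI impI ballI)
  fix i j a assume ij: "i < n" "j < n" and a: "a \<in> B"
  have fin: "finite T" "finite ({..<n} - T)"
    using T(1) finite_subset[of T "{..<n}"] by (auto simp: gap_cuts_def)
  consider "i \<in> T" "j \<in> T" | "i \<notin> T" "j \<notin> T" | "i \<in> T" "j \<notin> T" | "i \<notin> T" "j \<in> T" by blast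
  then show "x i - x j < a \<longleftrightarrow> y i - y j < a"
  proof cases
    case 1
    then show ?thesis using lower a enum_pos_less[OF fin(1)] restrict_coords_enum_pos[OF fin(1)]
      unfolding same_side_def by metis
  next
    case 2
    then have "i \<in> {..<n} - T" "j \<in> {..<n} - T" using ij by auto
    then show ?thesis using upper a enum_pos_less[OF fin(2)] restrict_coords_enum_pos[OF fin(2)]
      unfolding same_side_def by metis
  next
    case 3
    then have "c < x j - x i" "c < y j - y i" using T ij unfolding gap_cuts_def by auto
    then show ?thesis using a B_bounds by force
  next
    case 4
    then have "c < x i - x j" "c < y i - y j" using T ij unfolding gap_cuts_def by auto
    then show ?thesis using a B_bounds by force
  qed
qed

lemma nth_cut_cong: "gap_cuts c n y = gap_cuts c n x \<Longrightarrow> nth_cut n y m = nth_cut n x m"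
  unfolding nth_cut_def by simp

definition points_of_level :: "nat \<Rightarrow> nat \<Rightarrow> (nat \<Rightarrow> real) set" where
  "points_of_level n l = {x \<in> diff_complement B n. gap_count n x = l}"

definition level_regions :: "nat \<Rightarrow> nat \<Rightarrow> (nat \<Rightarrow> real) set set" where
  "level_regions n l = region_of B n ` points_of_level n l"

definition split_region :: "nat \<Rightarrow> nat \<Rightarrow> (nat \<Rightarrow> real) \<Rightarrow> nat set \<times> (nat \<Rightarrow> real) set \<times> (nat \<Rightarrow> real) set" where
  "split_region n l x =
     (nth_cut n x l,
      region_of B (card (nth_cut n x l)) (restrict_coords (nth_cut n x l) x),
      region_of B (card ({..<n} - nth_cut n x l)) (restrict_coords ({..<n} - nth_cut n x l) x))"

lemma region_of_eq_iff_split_region_eq: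
  assumes x: "x \<in> points_of_level n (l1 + l2)" and y: "y \<in> points_of_level n (l1 + l2)"
  shows "region_of B n x = region_of B n y \<longleftrightarrow> split_region n l1 x = split_region n l1 y"
proof -
  have xS: "x \<in> diff_complement B n" "l1 \<le> gap_count n x"
    and yS: "y \<in> diff_complement B n" "l1 \<le> gap_count n y"
    using x y by (auto simp: points_of_level_def)
  define T where "T = nth_cut n x l1"
  define S where "S = {..<n} - T"
  have T: "T \<subseteq> {..<n}" "T \<in> gap_cuts c n x"
    unfolding T_def using nth_cut_subset[OF xS(2)] nth_cut_in_gap_cuts[OF xS(2)] by auto
  have S: "S \<subseteq> {..<n}" unfolding S_def by auto
  have restrict_eq_iff: "region_of B (card U) (restrict_coords U x) = region_of B (card U) (restrict_coords U y)
      \<longleftrightarrow> same_side B (card U) (restrict_coords U x) (restrict_coords U y)" if "U \<subseteq> {..<n}" for U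
    using region_of_eq_iff restrict_coords_in_diff_complement that xS(1) yS(1) by blast
  show ?thesis
  proof
    assume "region_of B n x = region_of B n y"
    then have xy: "same_side B n x y" using region_of_eq_iff xS(1) yS(1) by blast
    then have "nth_cut n y l1 = T"
      unfolding T_def by (intro nth_cut_cong gap_cuts_eq_if_same_side xS(1) yS(1))
    then show "split_region n l1 x = split_region n l1 y"
      using restrict_eq_iff[OF T(1)] restrict_eq_iff[OF S] xy
        same_side_restrict_coords[OF T(1)] same_side_restrict_coords[OF S]
      unfolding split_region_def T_def[symmetric] S_def by simp
  next
    assume split: "split_region n l1 x = split_region n l1 y"
    then have "nth_cut n y l1 = T" unfolding split_region_def T_def by simp
    then have "T \<in> gap_cuts c n y" using nth_cut_in_gap_cuts[OF yS(2)] by simp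
    moreover have "same_side B (card T) (restrict_coords T x) (restrict_coords T y)"
      "same_side B (card S) (restrict_coords S x) (restrict_coords S y)"
      using split \<open>nth_cut n y l1 = T\<close> restrict_eq_iff[OF T(1)] restrict_eq_iff[OF S]
      unfolding split_region_def T_def[symmetric] S_def by auto
    ultimately have "same_side B n x y"
      using same_side_of_restrictions[OF T(2)] unfolding S_def by blast
    then show "region_of B n x = region_of B n y" using region_of_eq_iff xS(1) yS(1) by blast
  qed
qed

lemma split_region_mem:
  assumes x: "x \<in> points_of_level n (l1 + l2)"
  shows "split_region n l1 x \<in> Sigma (Pow {..<n}) (\<lambda>T. level_regions (card T) l1 \<times> level_regions (n - card T) l2)"
proof -
  have xS: "x \<in> diff_complement B n" "gap_count n x = l1 + l2" using x by (auto simp: points_of_level_def)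
  then have l1: "l1 \<le> gap_count n x" by simp
  define T where "T = nth_cut n x l1"
  have T: "T \<subseteq> {..<n}" unfolding T_def by (rule nth_cut_subset[OF l1])
  have card_S: "card ({..<n} - T) = n - card T" using T by (simp add: card_Diff_subset finite_subset)
  have "restrict_coords T x \<in> points_of_level (card T) l1"
    using restrict_coords_in_diff_complement[OF T xS(1)] gap_count_restrict_nth_cut(1)[OF l1]
    unfolding points_of_level_def T_def by simp
  moreover have "restrict_coords ({..<n} - T) x \<in> points_of_level (n - card T) l2"
    using restrict_coords_in_diff_complement[OF _ xS(1), of "{..<n} - T"]
      gap_count_restrict_nth_cut(2)[OF l1] xS(2) card_S
    unfolding points_of_level_def T_def by simp
  ultimately show ?thesis
    unfolding split_region_def T_def[symmetric] level_regions_def using T card_S by auto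
qed

lemma glue_in_diff_complement:
  assumes T: "T \<subseteq> {..<n}" and y: "y \<in> diff_complement B (card T)"
    and z: "z \<in> diff_complement B (n - card T)" and cut: "T \<in> gap_cuts c n (glue n T y z M)"
  shows "glue n T y z M \<in> diff_complement B n"
proof -
  let ?x = "glue n T y z M" and ?S = "{..<n} - T"
  have fin: "finite T" "finite ?S" using T finite_subset by auto
  have card_S: "card ?S = n - card T" using T fin(1) by (simp add: card_Diff_subset)
  have "?x i - ?x j \<notin> B" if ij: "i < n" "j < n" "i \<noteq> j" for i j
  proof -
    consider "i \<in> T" "j \<in> T" | "i \<in> ?S" "j \<in> ?S" | "i \<in> T" "j \<in> ?S" | "i \<in> ?S" "j \<in> T"
      using ij by blast
    then show ?thesis
    proof cases
      case 1
      then have "enum_pos T i \<noteq> enum_pos T j" using enum_set_enum_pos[OF fin(1)] ij(3) by metis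
      then show ?thesis using 1 ij y enum_pos_less[OF fin(1)] by (auto simp: diff_complement_iff glue_def)
    next
      case 2
      then have "enum_pos ?S i \<noteq> enum_pos ?S j" using enum_set_enum_pos[OF fin(2)] ij(3) by metis
      then show ?thesis
        using 2 ij z enum_pos_less[OF fin(2)] card_S by (auto simp: diff_complement_iff glue_def)
    next
      case 3
      then have "c < ?x j - ?x i" using cut by (auto simp: gap_cuts_def)
      then show ?thesis using B_bounds c_pos by force
    next
      case 4
      then have "c < ?x i - ?x j" using cut by (auto simp: gap_cuts_def)
      then show ?thesis using B_bounds by force
    qed
  qed
  then show ?thesis by (auto simp: diff_complement_iff Rn_def glue_def)
qed

lemma card_gap_cuts_below_above:
  assumes T: "T \<in> gap_cuts c n x"
  shows "card {U \<in> gap_cuts c n x. U \<subseteq> T} + card {U \<in> gap_cuts c n x. T \<subseteq> U} = gap_count n x + 2"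
proof -
  let ?A1 = "{U \<in> gap_cuts c n x. U \<subseteq> T}" and ?A2 = "{U \<in> gap_cuts c n x. T \<subseteq> U}"
  have "gap_cuts c n x = ?A1 \<union> ?A2" using finite_chain_gap_cuts(2)[of n x] T unfolding chain_subset_def by blast
  moreover have "?A1 \<inter> ?A2 = {T}" using T by auto
  moreover have "finite ?A1" "finite ?A2" using finite_gap_cuts by auto
  ultimately show ?thesis using card_Un_Int[of ?A1 ?A2] card_gap_cuts[of n x] by simp
qed

lemma nth_cut_eq_by_card_below:
  assumes T: "T \<in> gap_cuts c n x" and below: "card {U \<in> gap_cuts c n x. U \<subseteq> T} = Suc l"
  shows "nth_cut n x l = T"
proof -
  have "chain_rank (gap_cuts c n x) T = card ({U \<in> gap_cuts c n x. U \<subseteq> T} - {T})"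
    unfolding chain_rank_def by (rule arg_cong[where f = card]) auto
  then have "chain_rank (gap_cuts c n x) T = l" using below T by simp
  then show ?thesis using nth_cut_chain_rank[OF T] by simp
qed

lemma split_region_surj:
  assumes T: "T \<subseteq> {..<n}" and y: "y \<in> points_of_level (card T) l1"
    and z: "z \<in> points_of_level (n - card T) l2"
  shows "(T, region_of B (card T) y, region_of B (n - card T) z) \<in> split_region n l1 ` points_of_level n (l1 + l2)"
proof -
  define S where "S = {..<n} - T"
  have fin: "finite T" "finite S" using T finite_subset unfolding S_def by auto
  have card_S: "card S = n - card T" unfolding S_def using T fin(1) by (simp add: card_Diff_subset)
  have yS: "y \<in> diff_complement B (card T)" "gap_count (card T) y = l1"
    and zS: "z \<in> diff_complement B (card S)" "gap_count (card S) z = l2"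
    using y z card_S by (auto simp: points_of_level_def)
  \<comment> \<open>Place a copy of z far above a copy of y.\<close>
  define M where "M = c + (\<Sum>k<card T. \<bar>y k\<bar>) + (\<Sum>k<n - card T. \<bar>z k\<bar>) + 1"
  define x where "x = glue n T y z M"
  define z' where "z' k = (if k < card S then z k + M else 0)" for k
  have cut: "T \<in> gap_cuts c n x" unfolding x_def by (rule glue_gap_cut[OF T]) (simp add: M_def)
  have x_in: "x \<in> diff_complement B n"
    unfolding x_def using glue_in_diff_complement[OF T yS(1) _ cut[unfolded x_def]] zS(1) card_S by simp
  have restrict_T: "restrict_coords T x = y"
    unfolding x_def using restrict_coords_glue_lower[OF T] yS(1) by (simp add: diff_complement_iff)
  have restrict_S: "restrict_coords S x = z'"
    unfolding x_def z'_def S_def by (rule restrict_coords_glue_upper)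
  have z': "region_of B (card S) z' = region_of B (card S) z" "gap_cuts c (card S) z' = gap_cuts c (card S) z"
    using translate_in_diff_complement[OF zS(1), of M] zS(1) region_of_eq_iff same_side_sym
      gap_cuts_eq_if_same_side unfolding z'_def by blast+
  have below: "card {U \<in> gap_cuts c n x. U \<subseteq> T} = Suc l1"
    using card_gap_cuts_restrict_coords[OF fin(1), where c = c and x = x] gap_cuts_on_gap_cut[OF cut]
      restrict_T card_gap_cuts[of "card T" y] yS(2) by simp
  moreover have "card {U \<in> gap_cuts c n x. T \<subseteq> U} = Suc l2"
    using card_gap_cuts_restrict_coords[OF fin(2), where c = c and x = x] card_gap_cuts_on_complement[OF cut]
      restrict_S z'(2) card_gap_cuts[of "card S" z] zS(2) unfolding S_def by simp
  ultimately have "x \<in> points_of_level n (l1 + l2)"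
    using card_gap_cuts_below_above[OF cut] x_in by (simp add: points_of_level_def)
  moreover have "split_region n l1 x = (T, region_of B (card T) y, region_of B (n - card T) z)"
    using nth_cut_eq_by_card_below[OF cut below] restrict_T restrict_S z'(1) card_S
    unfolding split_region_def S_def by simp
  ultimately show ?thesis by (metis image_eqI)
qed

lemma finite_level_regions: "finite (level_regions n l)"
  unfolding level_regions_def points_of_level_def
  by (rule finite_subset[OF _ finite_regions_of[OF finite_B, of n]]) auto

lemma card_level_regions_add:
  "card (level_regions n (l1 + l2)) =
     (\<Sum>i\<le>n. (n choose i) * card (level_regions i l1) * card (level_regions (n - i) l2))"
proof -
  have "card (level_regions n (l1 + l2)) = card (split_region n l1 ` points_of_level n (l1 + l2))"
    unfolding level_regions_def
    by (rule card_image_eq_if_same_kernel) (rule region_of_eq_iff_split_region_eq)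
  also have "split_region n l1 ` points_of_level n (l1 + l2)
      = Sigma (Pow {..<n}) (\<lambda>T. level_regions (card T) l1 \<times> level_regions (n - card T) l2)"
  proof (intro equalityI image_subsetI subsetI)
    fix P assume "P \<in> Sigma (Pow {..<n}) (\<lambda>T. level_regions (card T) l1 \<times> level_regions (n - card T) l2)"
    then obtain T y z where "T \<subseteq> {..<n}" "y \<in> points_of_level (card T) l1"
      "z \<in> points_of_level (n - card T) l2" "P = (T, region_of B (card T) y, region_of B (n - card T) z)"
      unfolding level_regions_def by blast
    then show "P \<in> split_region n l1 ` points_of_level n (l1 + l2)" using split_region_surj by simp
  qed (rule split_region_mem)
  also have "card \<dots> = (\<Sum>T\<in>Pow {..<n}. card (level_regions (card T) l1) * card (level_regions (n - card T) l2))"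
    by (simp add: card_SigmaI finite_level_regions card_cartesian_product)
  also have "\<dots> = (\<Sum>i\<le>n. (n choose i) * card (level_regions i l1) * card (level_regions (n - i) l2))"
    using sum_Pow_card[of "\<lambda>i. card (level_regions i l1) * card (level_regions (n - i) l2)"]
    by (simp add: mult.assoc)
  finally show ?thesis .
qed

lemma r_level_diff_arrangement: "r_level l (diff_arrangement B) n = card (level_regions n l)"
proof -
  have "{R \<in> regions (diff_arrangement B) n. level n R = l} = level_regions n l"
    unfolding regions_diff_arrangement level_regions_def points_of_level_def
    using level_region_of by auto
  then show ?thesis unfolding r_level_def by simp
qed

end

theorem theorem1p4:
  fixes A :: "real set" and H :: "nat \<Rightarrow> (nat \<Rightarrow> real) set"
    and l1 l2 n :: nat
  assumes "finite A" and "A \<noteq> {}" and "\<forall>a\<in>A. a > 0"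
    and "H = C_arr A \<or> H = Cstar_arr A"
  shows "r_level (l1 + l2) H n =
           (\<Sum>i\<le>n. (n choose i) * r_level l1 H i * r_level l2 H (n - i))"
proof -
  define B where "B = (if H = C_arr A then insert 0 A else A)"
  have H: "H = diff_arrangement B"
    unfolding B_def using assms(4) C_arr_eq_diff_arrangement Cstar_arr_eq_diff_arrangement by auto
  have "Max A \<in> A" using assms(1,2) by (rule Max_in)
  then have "gap_arrangement B (Max A)"
    using assms(1,3) Max_ge[OF assms(1)] by unfold_locales (auto simp: B_def less_imp_le)
  then show ?thesis
    unfolding H by (simp add: gap_arrangement.r_level_diff_arrangement gap_arrangement.card_level_regions_add)
qed

end
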